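(* Let $\Lambda=(\mathcal{L}\subset\mathbb{R}^s,\mathbb{R}^n)$ be a generic cut-and-project scheme with associated matrix $L$ and self-similarity $A\in\mathbb{R}^{n\times n}$, and let $B\in\mathbb{R}^{(s-n)\times(s-n)}$, $C\in\mathbb{Z}^{s\times s}$ satisfy $\begin{pmatrix}A&O\\O&B\end{pmatrix}L=LC$. Then each eigenvalue of $A$ is an algebraic conjugate of an eigenvalue of $B$, and each eigenvalue of $B$ is an algebraic conjugate of an eigenvalue of $A$.
   Context: Two algebraic numbers are algebraic conjugates if they have the same minimal polynomial over $\mathbb{Q}$. A lattice $\mathcal{L}\subset\mathbb{R}^s$ is $\{L\mathbf{r}:\mathbf{r}\in\mathbb{Z}^s\}$ for a non-singular $L\in\mathbb{R}^{s\times s}$. For $1\le n<s$ the scheme $(\mathcal{L}\subset\mathbb{R}^s,\mathbb{R}^n)$ has projections $\pi_\parallel(\mathbf{x})=(x_1,\dots,x_n)^\top$, $\pi_\perp(\mathbf{x})=(x_{n+1},\dots,x_s)^\top$; it is generic if $\pi_\parallel|_{\mathcal{L}}$, $\pi_\perp|_{\mathcal{L}}$ are injective and $\pi_\perp(\mathcal{L})$ is dense in $\mathbb{R}^{s-n}$. $A$ is a self-similarity of a generic scheme if $A\pi_\parallel(\mathcal{L})\subset\pi_\parallel(\mathcal{L})$ and there exist $C\in\mathbb{Z}^{s\times s}$, $B$ real with $\begin{pmatrix}A&O\\O&B\end{pmatrix}L=LC$. *)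

theory Defs
  imports "Jordan_Normal_Form.Jordan_Normal_Form"
begin

definition lattice_of :: "nat \<Rightarrow> real mat \<Rightarrow> real vec set" where
  "lattice_of s L = {L *\<^sub>v r | r. r \<in> carrier_vec s \<and> (\<forall>i<s. r $ i \<in> \<int>)}"

definition pi_par :: "nat \<Rightarrow> real vec \<Rightarrow> real vec" where
  "pi_par n x = vec n (\<lambda>i. x $ i)"

definition pi_perp :: "nat \<Rightarrow> nat \<Rightarrow> real vec \<Rightarrow> real vec" where
  "pi_perp s n x = vec (s - n) (\<lambda>i. x $ (n + i))"

text \<open>Generic cut-and-project scheme with associated matrix L.  Density of the projection
  in R^(s-n) is written out with the (equivalent) sup-norm balls.\<close>
definition generic_cps :: "nat \<Rightarrow> nat \<Rightarrow> real mat \<Rightarrow> bool" where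
  "generic_cps s n L \<longleftrightarrow>
     1 \<le> n \<and> n < s \<and> L \<in> carrier_mat s s \<and> det L \<noteq> 0 \<and>
     inj_on (pi_par n) (lattice_of s L) \<and>
     inj_on (pi_perp s n) (lattice_of s L) \<and>
     (\<forall>y \<in> carrier_vec (s - n). \<forall>e > 0. \<exists>x \<in> lattice_of s L.
        \<forall>i < s - n. \<bar>pi_perp s n x $ i - y $ i\<bar> < e)"

definition self_similarity :: "nat \<Rightarrow> nat \<Rightarrow> real mat \<Rightarrow> real mat \<Rightarrow> bool" where
  "self_similarity s n L A \<longleftrightarrow>
     A \<in> carrier_mat n n \<and>
     (\<lambda>v. A *\<^sub>v v) ` (pi_par n ` lattice_of s L) \<subseteq> pi_par n ` lattice_of s L \<and>
     (\<exists>(C :: int mat) (B :: real mat). C \<in> carrier_mat s s \<and> B \<in> carrier_mat (s - n) (s - n) \<and>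
        four_block_mat A (0\<^sub>m n (s - n)) (0\<^sub>m (s - n) n) B * L = L * map_mat real_of_int C)"

text \<open>Minimal polynomial over Q of a complex number (meaningful for algebraic numbers).\<close>
definition min_poly_Q :: "complex \<Rightarrow> rat poly" where
  "min_poly_Q x = (THE p. monic p \<and> poly (map_poly of_rat p) x = 0 \<and>
      (\<forall>q. q \<noteq> 0 \<and> poly (map_poly of_rat q) x = 0 \<longrightarrow> degree p \<le> degree q))"

definition alg_conjugate :: "complex \<Rightarrow> complex \<Rightarrow> bool" where
  "alg_conjugate x y \<longleftrightarrow> algebraic x \<and> algebraic y \<and> min_poly_Q x = min_poly_Q y"

end

theory Submission
  imports Defs
begin

text \<open>Write \<open>M = diag(A, B)\<close>. As \<open>M L = L C\<close> with \<open>L\<close> invertible, every eigenvalue \<open>z\<close> of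
  \<open>M\<close> is an eigenvalue of the integer matrix \<open>C\<close>, hence algebraic; let \<open>p\<close> be its minimal
  polynomial over \<open>\<rat>\<close>. Then \<open>p(M)\<close> is singular, hence so is the rational matrix
  \<open>p(C) = L\<^sup>-\<^sup>1 p(M) L\<close>, and a nonzero integer vector \<open>r\<close> in its kernel yields a nonzero
  lattice point \<open>y = L r\<close> with \<open>p(M) y = 0\<close>. Genericity of the scheme makes both projections
  of \<open>y\<close> nonzero, so \<open>p(A)\<close> and \<open>p(B)\<close> are both singular: \<open>p\<close> has a root among the
  eigenvalues of \<open>A\<close> and one among those of \<open>B\<close>. Finally, every root of the minimal
  polynomial of \<open>z\<close> is a conjugate of \<open>z\<close>.\<close>

definition poly_mat :: "'a::comm_ring_1 poly \<Rightarrow> 'a mat \<Rightarrow> 'a mat" where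
  "poly_mat p X = fold_coeffs (\<lambda>a M. a \<cdot>\<^sub>m 1\<^sub>m (dim_row X) + X * M) p (0\<^sub>m (dim_row X) (dim_row X))"

lemma poly_mat_0 [simp]: "poly_mat 0 X = 0\<^sub>m (dim_row X) (dim_row X)"
  by (simp add: poly_mat_def)

lemma poly_mat_pCons:
  assumes "X \<in> carrier_mat n n"
  shows "poly_mat (pCons a p) X = a \<cdot>\<^sub>m 1\<^sub>m n + X * poly_mat p X"
  using assms by (cases "p = 0 \<and> a = 0") (auto simp: poly_mat_def)

lemma poly_mat_carrier [simp]: "X \<in> carrier_mat n n \<Longrightarrow> poly_mat p X \<in> carrier_mat n n"
  by (induct p rule: pCons_induct) (auto simp: poly_mat_pCons)

lemma poly_mat_dims [simp]:
  assumes "X \<in> carrier_mat n n"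
  shows "dim_row (poly_mat p X) = n" "dim_col (poly_mat p X) = n"
  using poly_mat_carrier[OF assms] by auto

lemma poly_mat_one: "X \<in> carrier_mat n n \<Longrightarrow> poly_mat 1 X = 1\<^sub>m n"
  by (simp add: one_pCons poly_mat_pCons, intro eq_matI, auto)

lemma poly_mat_linear: "X \<in> carrier_mat n n \<Longrightarrow> poly_mat [:- a, 1:] X = char_matrix X a"
  by (simp add: poly_mat_pCons char_matrix_def, intro eq_matI, auto)

lemma poly_mat_add:
  assumes X: "X \<in> carrier_mat n n"
  shows "poly_mat (p + q) X = poly_mat p X + poly_mat q X"
proof (induct p q rule: poly_induct2)
  case 0
  then show ?case using X by simp
next
  case (pCons a p b q)
  have "poly_mat (pCons a p + pCons b q) X =
      (a + b) \<cdot>\<^sub>m 1\<^sub>m n + X * (poly_mat p X + poly_mat q X)"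
    using X pCons by (simp add: poly_mat_pCons)
  also have "\<dots> = (a \<cdot>\<^sub>m 1\<^sub>m n + X * poly_mat p X) + (b \<cdot>\<^sub>m 1\<^sub>m n + X * poly_mat q X)"
    using X
    by (simp add: mult_add_distrib_mat[OF X poly_mat_carrier[OF X] poly_mat_carrier[OF X]],
        intro eq_matI, auto simp: algebra_simps)
  finally show ?case using X by (simp add: poly_mat_pCons)
qed

lemma poly_mat_smult:
  assumes X: "X \<in> carrier_mat n n"
  shows "poly_mat (Polynomial.smult c p) X = c \<cdot>\<^sub>m poly_mat p X"
proof (induct p rule: pCons_induct)
  case 0
  then show ?case using X by simp
next
  case (pCons a p)
  have "poly_mat (Polynomial.smult c (pCons a p)) X = (c * a) \<cdot>\<^sub>m 1\<^sub>m n + X * (c \<cdot>\<^sub>m poly_mat p X)"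
    using X pCons by (simp add: poly_mat_pCons)
  also have "\<dots> = c \<cdot>\<^sub>m (a \<cdot>\<^sub>m 1\<^sub>m n + X * poly_mat p X)"
    using X
    by (simp add: mult_smult_distrib[OF X poly_mat_carrier[OF X]],
        intro eq_matI, auto simp: algebra_simps)
  finally show ?case using X by (simp add: poly_mat_pCons)
qed

lemma poly_mat_mult:
  assumes X: "X \<in> carrier_mat n n"
  shows "poly_mat (p * q) X = poly_mat p X * poly_mat q X"
proof (induct p rule: pCons_induct)
  case 0
  then show ?case using X by (simp add: left_mult_zero_mat[of _ n n])
next
  case (pCons a p)
  have "poly_mat (pCons a p * q) X = a \<cdot>\<^sub>m poly_mat q X + X * (poly_mat p X * poly_mat q X)"
    using X pCons by (simp add: poly_mat_add poly_mat_smult poly_mat_pCons, intro eq_matI, auto)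
  also have "\<dots> = (a \<cdot>\<^sub>m 1\<^sub>m n + X * poly_mat p X) * poly_mat q X"
    using X
    by (simp add: add_mult_distrib_mat[of _ n n _ _ n] assoc_mult_mat[of X n n _ n _ n],
        intro eq_matI, auto)
  finally show ?case using X by (simp add: poly_mat_pCons)
qed

lemma (in comm_ring_hom) poly_mat_hom:
  assumes X: "X \<in> carrier_mat n n"
  shows "mat\<^sub>h (poly_mat p X) = poly_mat (map_poly hom p) (mat\<^sub>h X)"
proof (induct p rule: pCons_induct)
  case 0
  then show ?case by (simp, intro eq_matI, auto)
next
  case (pCons a p)
  have "mat\<^sub>h (poly_mat (pCons a p) X) = mat\<^sub>h (a \<cdot>\<^sub>m 1\<^sub>m n) + mat\<^sub>h (X * poly_mat p X)"
    using X by (simp add: poly_mat_pCons, intro eq_matI, auto simp: hom_add)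
  also have "\<dots> = hom a \<cdot>\<^sub>m 1\<^sub>m n + mat\<^sub>h X * mat\<^sub>h (poly_mat p X)"
    using X by (simp add: mat_hom_mult[OF X poly_mat_carrier[OF X]], intro eq_matI, auto)
  finally show ?case
    using X pCons by (simp add: poly_mat_pCons Polynomial.map_poly_pCons[of hom, OF hom_zero])
qed

lemma poly_mat_intertwine:
  assumes M: "M \<in> carrier_mat n n" and L: "L \<in> carrier_mat n n" and C: "C \<in> carrier_mat n n"
    and commute: "M * L = L * C"
  shows "poly_mat p M * L = L * poly_mat p C"
proof (induct p rule: pCons_induct)
  case 0
  then show ?case using M L C by simp
next
  case (pCons a p)
  let ?E = "poly_mat p M" and ?F = "poly_mat p C"
  have E: "?E \<in> carrier_mat n n" and F: "?F \<in> carrier_mat n n" using M C by auto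
  have "poly_mat (pCons a p) M * L = a \<cdot>\<^sub>m L + M * (?E * L)"
    using M E L
    by (simp add: poly_mat_pCons add_mult_distrib_mat[of _ n n _ _ n] assoc_mult_mat[of M n n _ n _ n]
        mult_smult_assoc_mat[of _ n n _ n])
  also have "M * (?E * L) = L * (C * ?F)"
    using pCons M L C F commute by (simp flip: assoc_mult_mat[of _ n n _ n _ n])
  also have "a \<cdot>\<^sub>m L + L * (C * ?F) = L * poly_mat (pCons a p) C"
    using L C F
    by (simp add: poly_mat_pCons mult_add_distrib_mat[of _ n n _ n]
        mult_smult_distrib[OF L one_carrier_mat])
  finally show ?case .
qed

lemma poly_mat_four_block:
  assumes A: "A \<in> carrier_mat n n" and B: "B \<in> carrier_mat m m"
  shows "poly_mat p (four_block_mat A (0\<^sub>m n m) (0\<^sub>m m n) B) =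
    four_block_mat (poly_mat p A) (0\<^sub>m n m) (0\<^sub>m m n) (poly_mat p B)"
proof (induct p rule: pCons_induct)
  case 0
  then show ?case using A B by simp
next
  case (pCons a p)
  have E: "poly_mat p A \<in> carrier_mat n n" and F: "poly_mat p B \<in> carrier_mat m m" using A B by auto
  have AB: "four_block_mat A (0\<^sub>m n m) (0\<^sub>m m n) B \<in> carrier_mat (n + m) (n + m)" using A B by auto
  have "poly_mat (pCons a p) (four_block_mat A (0\<^sub>m n m) (0\<^sub>m m n) B) =
    a \<cdot>\<^sub>m four_block_mat (1\<^sub>m n) (0\<^sub>m n m) (0\<^sub>m m n) (1\<^sub>m m) +
    four_block_mat A (0\<^sub>m n m) (0\<^sub>m m n) B *
    four_block_mat (poly_mat p A) (0\<^sub>m n m) (0\<^sub>m m n) (poly_mat p B)"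
    using pCons AB by (simp add: poly_mat_pCons)
  also have "\<dots> = four_block_mat (a \<cdot>\<^sub>m 1\<^sub>m n + A * poly_mat p A) (0\<^sub>m n m) (0\<^sub>m m n)
      (a \<cdot>\<^sub>m 1\<^sub>m m + B * poly_mat p B)"
    using A B E F
    by (simp del: four_block_one_mat
        add: smult_four_block_mat[of _ n n _ m _ m] add_four_block_mat[of _ n n _ m _ m]
        mult_four_block_mat[OF A zero_carrier_mat zero_carrier_mat B E zero_carrier_mat zero_carrier_mat F])
  finally show ?case using A B by (simp add: poly_mat_pCons)
qed

lemma det_poly_mat_mult:
  "X \<in> carrier_mat n n \<Longrightarrow> det (poly_mat (p * q) X) = det (poly_mat p X) * det (poly_mat q X)"
  by (simp add: poly_mat_mult det_mult[of _ n])

lemma det_poly_mat_prod_list: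
  assumes X: "X \<in> carrier_mat n n"
  shows "det (poly_mat (\<Prod>a\<leftarrow>as. f a) X) = (\<Prod>a\<leftarrow>as. det (poly_mat (f a) X))"
  by (induct as) (simp_all add: poly_mat_one[OF X] det_poly_mat_mult[OF X])

lemma eigenvalue_four_block_diag_iff:
  fixes A B :: "'a :: field mat"
  assumes A: "A \<in> carrier_mat n n" and B: "B \<in> carrier_mat m m"
  shows "eigenvalue (four_block_mat A (0\<^sub>m n m) (0\<^sub>m m n) B) e \<longleftrightarrow> eigenvalue A e \<or> eigenvalue B e"
proof -
  have AB: "four_block_mat A (0\<^sub>m n m) (0\<^sub>m m n) B \<in> carrier_mat (n + m) (n + m)" using A B by auto
  have "det (char_matrix (four_block_mat A (0\<^sub>m n m) (0\<^sub>m m n) B) e) =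
      det (char_matrix A e) * det (char_matrix B e)"
    using A B
    by (simp flip: poly_mat_linear[OF AB] poly_mat_linear[OF A] poly_mat_linear[OF B]
        add: poly_mat_four_block det_four_block_mat_upper_right_zero[of _ n _ m])
  then show ?thesis using eigenvalue_det[OF A] eigenvalue_det[OF B] eigenvalue_det[OF AB] by simp
qed

lemma det_poly_mat_eq_0_iff:
  fixes X :: "complex mat"
  assumes X: "X \<in> carrier_mat n n" and p: "p \<noteq> 0"
  shows "det (poly_mat p X) = 0 \<longleftrightarrow> (\<exists>a. poly p a = 0 \<and> eigenvalue X a)"
proof
  assume det0: "det (poly_mat p X) = 0"
  obtain as where as: "p = Polynomial.smult (lead_coeff p) (\<Prod>a\<leftarrow>as. [:- a, 1:])"
    using fundamental_theorem_algebra_factorized by metis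
  have "det (poly_mat p X) = lead_coeff p ^ n * (\<Prod>a\<leftarrow>as. det (char_matrix X a))"
    using X
    by (subst as) (simp add: poly_mat_smult det_smult det_poly_mat_prod_list poly_mat_linear)
  then obtain a where a: "a \<in> set as" "det (char_matrix X a) = 0"
    using det0 p by (auto simp: prod_list_zero_iff)
  then have "poly p a = 0"
    by (subst as) (auto simp: poly_prod_list prod_list_zero_iff)
  then show "\<exists>a. poly p a = 0 \<and> eigenvalue X a"
    using a eigenvalue_det[OF X] by auto
next
  assume "\<exists>a. poly p a = 0 \<and> eigenvalue X a"
  then obtain a q where "p = [:- a, 1:] * q" and a: "eigenvalue X a"
    by (auto simp: poly_eq_0_iff_dvd elim: dvdE)
  then have "det (poly_mat p X) = det (char_matrix X a) * det (poly_mat q X)"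
    using X by (simp only: det_poly_mat_mult[OF X] poly_mat_linear[OF X])
  then show "det (poly_mat p X) = 0"
    using a eigenvalue_det[OF X] by simp
qed

lemma det_poly_mat_intertwine:
  fixes M L C :: "'a :: idom mat"
  assumes "M \<in> carrier_mat n n" "L \<in> carrier_mat n n" "C \<in> carrier_mat n n"
    and "M * L = L * C" "det L \<noteq> 0"
  shows "det (poly_mat p M) = 0 \<longleftrightarrow> det (poly_mat p C) = 0"
proof -
  have "det (poly_mat p M) * det L = det L * det (poly_mat p C)"
    using poly_mat_intertwine[OF assms(1-4), of p] assms(1-3) by (simp flip: det_mult[of _ n])
  then show ?thesis using \<open>det L \<noteq> 0\<close> by auto
qed

lemma eigenvalue_intertwine:
  fixes M L C :: "'a :: field mat"
  assumes "M \<in> carrier_mat n n" "L \<in> carrier_mat n n" "C \<in> carrier_mat n n"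
    and "M * L = L * C" "det L \<noteq> 0"
  shows "eigenvalue M e \<longleftrightarrow> eigenvalue C e"
  using det_poly_mat_intertwine[OF assms, of "[:- e, 1:]"] assms(1,3)
  by (simp add: eigenvalue_det poly_mat_linear)

interpretation of_rat_poly_hom: map_poly_idom_hom "of_rat :: rat \<Rightarrow> complex" ..

definition is_min_poly_Q :: "complex \<Rightarrow> rat poly \<Rightarrow> bool" where
  "is_min_poly_Q x p \<longleftrightarrow> monic p \<and> poly (map_poly of_rat p) x = 0 \<and>
      (\<forall>q. q \<noteq> 0 \<and> poly (map_poly of_rat q) x = 0 \<longrightarrow> degree p \<le> degree q)"

lemma is_min_poly_Q_nonzero: "is_min_poly_Q x p \<Longrightarrow> p \<noteq> 0"
  by (auto simp: is_min_poly_Q_def)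

lemma is_min_poly_Q_unique:
  assumes p: "is_min_poly_Q x p" and q: "is_min_poly_Q x q"
  shows "p = q"
proof (rule ccontr)
  assume "p \<noteq> q"
  have "degree p = degree q"
    using p q is_min_poly_Q_nonzero[OF p] is_min_poly_Q_nonzero[OF q]
    unfolding is_min_poly_Q_def by (meson antisym)
  then have "degree (p - q) < degree p"
    using p q \<open>p \<noteq> q\<close>
    by (intro degree_less_if_less_eqI) (auto simp: is_min_poly_Q_def degree_diff_le)
  moreover have "degree p \<le> degree (p - q)"
    using p q \<open>p \<noteq> q\<close> by (auto simp: is_min_poly_Q_def of_rat_poly_hom.hom_minus)
  ultimately show False by simp
qed

lemma min_poly_Q_eqI: "is_min_poly_Q x p \<Longrightarrow> min_poly_Q x = p"
  unfolding min_poly_Q_def is_min_poly_Q_def[symmetric]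
  by (rule the_equality) (auto intro: is_min_poly_Q_unique)

lemma is_min_poly_Q_exists:
  assumes "q \<noteq> 0" "poly (map_poly of_rat q) x = 0"
  shows "\<exists>p. is_min_poly_Q x p"
proof -
  define P where "P = (\<lambda>q :: rat poly. q \<noteq> 0 \<and> poly (map_poly of_rat q) x = 0)"
  obtain q0 where q0: "P q0" "\<And>q. P q \<Longrightarrow> degree q0 \<le> degree q"
    using ex_has_least_nat[of P q degree] assms unfolding P_def by blast
  define p where "p = Polynomial.smult (inverse (lead_coeff q0)) q0"
  have "monic p" "degree p = degree q0" "poly (map_poly of_rat p) x = 0"
    using q0(1) by (auto simp: P_def p_def of_rat_hom.map_poly_hom_smult)
  then show ?thesis using q0 unfolding is_min_poly_Q_def P_def by metis
qed

lemma is_min_poly_Q_dvd: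
  assumes p: "is_min_poly_Q x p" and q: "poly (map_poly of_rat q) x = 0"
  shows "p dvd q"
proof (rule ccontr)
  assume "\<not> p dvd q"
  then have r: "q mod p \<noteq> 0" by (simp add: mod_eq_0_iff_dvd)
  have "map_poly (of_rat :: rat \<Rightarrow> complex) q =
      map_poly of_rat (q div p) * map_poly of_rat p + map_poly of_rat (q mod p)"
    by (metis div_mult_mod_eq of_rat_poly_hom.hom_add of_rat_poly_hom.hom_mult)
  then have "poly (map_poly of_rat (q mod p)) x = 0" using p q by (simp add: is_min_poly_Q_def)
  then have "degree p \<le> degree (q mod p)" using p r by (simp add: is_min_poly_Q_def)
  moreover have "degree (q mod p) < degree p"
    using r degree_mod_less[OF is_min_poly_Q_nonzero[OF p]] by blast
  ultimately show False by simp
qed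

lemma is_min_poly_Q_root:
  assumes p: "is_min_poly_Q x p" and y: "poly (map_poly of_rat p) y = 0"
  shows "is_min_poly_Q y p"
proof -
  obtain p' where p': "is_min_poly_Q y p'"
    using is_min_poly_Q_exists[OF is_min_poly_Q_nonzero[OF p] y] by blast
  obtain k where k: "p = p' * k"
    using is_min_poly_Q_dvd[OF p' y] by (elim dvdE)
  have k0: "k \<noteq> 0" using k is_min_poly_Q_nonzero[OF p] by auto
  have deg: "degree p = degree p' + degree k"
    using k k0 is_min_poly_Q_nonzero[OF p'] by (simp add: degree_mult_eq)
  have "poly (map_poly of_rat k) x \<noteq> 0"
  proof
    assume "poly (map_poly of_rat k) x = 0"
    then have "degree p' = 0" using p k0 deg by (auto simp: is_min_poly_Q_def)
    moreover have "monic p'" using p' by (simp add: is_min_poly_Q_def)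
    ultimately have "p' = 1" using monic_degree_0 by blast
    then show False using p' by (simp add: is_min_poly_Q_def)
  qed
  then have "poly (map_poly of_rat p') x = 0"
    using p k by (simp add: is_min_poly_Q_def of_rat_poly_hom.hom_mult)
  then have "degree p \<le> degree p'"
    using p is_min_poly_Q_nonzero[OF p'] by (simp add: is_min_poly_Q_def)
  then show ?thesis
    using p p' y deg by (auto simp: is_min_poly_Q_def)
qed

lemma algebraic_if_rat_poly_root:
  assumes "q \<noteq> 0" "poly (map_poly of_rat q) x = 0"
  shows "algebraic x"
  unfolding algebraic_altdef
  by (rule exI[of _ "map_poly of_rat q"]) (use assms in \<open>auto simp: coeff_map_poly\<close>)

lemma alg_conjugateI:
  assumes p: "is_min_poly_Q x p" and y: "poly (map_poly of_rat p) y = 0"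
  shows "alg_conjugate x y"
proof -
  have "algebraic x" "algebraic y"
    using algebraic_if_rat_poly_root[OF is_min_poly_Q_nonzero[OF p]] p y
    unfolding is_min_poly_Q_def by blast+
  then show ?thesis
    using is_min_poly_Q_root[OF p y] p by (simp add: alg_conjugate_def min_poly_Q_eqI)
qed

lemma eigenvalue_of_int_mat_rat_poly_root:
  fixes C :: "int mat"
  assumes C: "C \<in> carrier_mat s s" and z: "eigenvalue (map_mat of_int C :: complex mat) z"
  shows "\<exists>q :: rat poly. q \<noteq> 0 \<and> poly (map_poly of_rat q) z = 0"
proof (intro exI conjI)
  have "coeff (char_poly C) s = 1" using degree_monic_char_poly[OF C] by simp
  then show "(of_int_poly (char_poly C) :: rat poly) \<noteq> 0" by auto
  have "poly (of_int_poly (char_poly C)) z = 0"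
    using eigenvalue_root_char_poly[of "map_mat of_int C :: complex mat" s] z C
    by (simp add: of_int_hom.char_poly_hom[OF C])
  then show "poly (map_poly of_rat (of_int_poly (char_poly C))) z = 0"
    by (simp add: map_poly_map_poly o_def)
qed

lemma prod_denominators_mult_Ints:
  fixes r :: "'i \<Rightarrow> rat"
  assumes "finite I" "i \<in> I"
  shows "of_int (\<Prod>j\<in>I. snd (quotient_of (r j))) * r i \<in> \<int>"
proof -
  obtain a b where ab: "quotient_of (r i) = (a, b)" by force
  have "(\<Prod>j\<in>I. snd (quotient_of (r j))) = b * (\<Prod>j\<in>I - {i}. snd (quotient_of (r j)))"
    using prod.remove[OF assms, of "\<lambda>j. snd (quotient_of (r j))"] ab by simp
  then have "of_int (\<Prod>j\<in>I. snd (quotient_of (r j))) * r i =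
      of_int (a * (\<Prod>j\<in>I - {i}. snd (quotient_of (r j))))"
    using quotient_of_denom_pos[OF ab] quotient_of_div[OF ab] by simp
  then show ?thesis by (metis Ints_of_int)
qed

lemma singular_rat_mat_int_kernel:
  fixes Q :: "rat mat"
  assumes Q: "Q \<in> carrier_mat s s" and "det Q = 0"
  shows "\<exists>k \<in> carrier_vec s. k \<noteq> 0\<^sub>v s \<and> Q *\<^sub>v map_vec of_int k = 0\<^sub>v s"
proof -
  obtain v where v: "v \<in> carrier_vec s" "v \<noteq> 0\<^sub>v s" "Q *\<^sub>v v = 0\<^sub>v s"
    using det_0_iff_vec_prod_zero[OF Q] \<open>det Q = 0\<close> by blast
  define D where "D = (\<Prod>j\<in>{..<s}. snd (quotient_of (v $ j)))"
  have "D \<noteq> 0"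
    unfolding D_def by (simp add: quotient_of_denom_pos' prod_pos less_imp_neq[symmetric])
  define k where "k = vec s (\<lambda>i. \<lfloor>of_int D * v $ i\<rfloor>)"
  have k_i: "of_int (k $ i) = of_int D * v $ i" if "i < s" for i
    using prod_denominators_mult_Ints[of "{..<s}" i "\<lambda>j. v $ j"] that
    by (simp add: k_def D_def)
  have "k \<noteq> 0\<^sub>v s"
  proof
    assume "k = 0\<^sub>v s"
    then have "v = 0\<^sub>v s" using k_i \<open>D \<noteq> 0\<close> v by (intro eq_vecI) force+
    then show False using v by simp
  qed
  moreover have "map_vec of_int k = of_int D \<cdot>\<^sub>v v"
    using k_i v by (intro eq_vecI) (auto simp: k_def)
  then have "Q *\<^sub>v map_vec of_int k = 0\<^sub>v s"
    using Q v by (simp add: mult_mat_vec) (intro eq_vecI, auto)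
  ultimately show ?thesis by (auto simp: k_def)
qed

lemma zero_in_lattice_of: "L \<in> carrier_mat s s \<Longrightarrow> 0\<^sub>v s \<in> lattice_of s L"
  unfolding lattice_of_def by (intro CollectI exI[of _ "0\<^sub>v s"]) auto

lemma lattice_of_carrier: "L \<in> carrier_mat s s \<Longrightarrow> y \<in> lattice_of s L \<Longrightarrow> y \<in> carrier_vec s"
  unfolding lattice_of_def by auto

lemma poly_mat_of_int_mat_int_kernel:
  fixes C :: "int mat" and p :: "rat poly"
  assumes C: "C \<in> carrier_mat s s"
    and singular: "det (poly_mat (map_poly of_rat p) (map_mat of_int C)) = (0 :: complex)"
  shows "\<exists>k \<in> carrier_vec s. k \<noteq> 0\<^sub>v s \<and>
    poly_mat (map_poly of_rat p) (map_mat of_int C) *\<^sub>v map_vec of_int k = (0\<^sub>v s :: complex vec)"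
proof -
  let ?Cc = "map_mat (of_int :: int \<Rightarrow> complex) C" and ?P = "map_poly (of_rat :: rat \<Rightarrow> complex) p"
  define Q where "Q = poly_mat p (map_mat rat_of_int C)"
  have Q: "Q \<in> carrier_mat s s" using C by (simp add: Q_def)
  have "map_mat of_rat Q = poly_mat ?P (map_mat of_rat (map_mat rat_of_int C))"
    unfolding Q_def by (rule of_rat_hom.poly_mat_hom) (use C in simp)
  also have "map_mat of_rat (map_mat rat_of_int C) = ?Cc" by (rule eq_matI) auto
  finally have PC: "poly_mat ?P ?Cc = map_mat of_rat Q" ..
  have "det Q = 0" using singular by (simp add: PC of_rat_hom.hom_det)
  then obtain k where k: "k \<in> carrier_vec s" "k \<noteq> 0\<^sub>v s" "Q *\<^sub>v map_vec of_int k = 0\<^sub>v s"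
    using singular_rat_mat_int_kernel[OF Q] by blast
  have "map_vec of_rat (Q *\<^sub>v map_vec of_int k) =
      map_mat of_rat Q *\<^sub>v map_vec of_rat (map_vec of_int k)"
    by (rule of_rat_hom.mult_mat_vec_hom[OF Q]) (use k in simp)
  also have "map_vec of_rat (map_vec rat_of_int k) = map_vec (of_int :: int \<Rightarrow> complex) k"
    by (intro eq_vecI) auto
  finally have "poly_mat ?P ?Cc *\<^sub>v map_vec of_int k = map_vec of_rat (Q *\<^sub>v map_vec of_int k)"
    by (simp add: PC)
  also have "\<dots> = 0\<^sub>v s" using k(3) by (intro eq_vecI) auto
  finally show ?thesis using k by blast
qed

lemma poly_mat_kernel_lattice_point:
  fixes L :: "real mat" and C :: "int mat" and M :: "complex mat" and p :: "rat poly"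
  assumes L: "L \<in> carrier_mat s s" "det L \<noteq> 0"
    and C: "C \<in> carrier_mat s s" and M: "M \<in> carrier_mat s s"
    and commute: "M * map_mat of_real L = map_mat of_real L * map_mat of_int C"
    and singular: "det (poly_mat (map_poly of_rat p) M) = 0"
  shows "\<exists>y \<in> lattice_of s L. y \<noteq> 0\<^sub>v s \<and> poly_mat (map_poly of_rat p) M *\<^sub>v map_vec of_real y = 0\<^sub>v s"
proof -
  let ?Lc = "map_mat complex_of_real L" and ?Cc = "map_mat (of_int :: int \<Rightarrow> complex) C"
  let ?P = "map_poly (of_rat :: rat \<Rightarrow> complex) p"
  have Lc: "?Lc \<in> carrier_mat s s" "det ?Lc \<noteq> 0" using L by (auto simp: of_real_hom.hom_det)
  have "det (poly_mat ?P ?Cc) = 0"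
    using singular det_poly_mat_intertwine[OF M Lc(1) _ commute Lc(2)] C by simp
  then obtain k where k: "k \<in> carrier_vec s" "k \<noteq> 0\<^sub>v s" "poly_mat ?P ?Cc *\<^sub>v map_vec of_int k = 0\<^sub>v s"
    using poly_mat_of_int_mat_int_kernel[OF C] by blast
  have kc: "map_vec (of_int :: int \<Rightarrow> complex) k \<in> carrier_vec s" using k by simp
  define y where "y = L *\<^sub>v map_vec of_int k"
  have "y \<in> lattice_of s L" unfolding lattice_of_def y_def using k by auto
  moreover have "map_vec (of_int :: int \<Rightarrow> real) k \<in> carrier_vec s"
    and "map_vec (of_int :: int \<Rightarrow> real) k \<noteq> 0\<^sub>v s"
    using k by (auto simp: vec_eq_iff)
  then have "y \<noteq> 0\<^sub>v s"
    using det_0_iff_vec_prod_zero[OF L(1)] L(2) unfolding y_def by blast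
  moreover have "poly_mat ?P M *\<^sub>v map_vec of_real y = 0\<^sub>v s"
  proof -
    have PM: "poly_mat ?P M \<in> carrier_mat s s" and PC: "poly_mat ?P ?Cc \<in> carrier_mat s s"
      using M C by auto
    have "map_vec of_real y = ?Lc *\<^sub>v map_vec of_int k"
      unfolding y_def using k
      by (simp add: of_real_hom.mult_mat_vec_hom[OF L(1)],
          intro arg_cong[of _ _ "(*\<^sub>v) ?Lc"] eq_vecI, auto)
    then have "poly_mat ?P M *\<^sub>v map_vec of_real y = (poly_mat ?P M * ?Lc) *\<^sub>v map_vec of_int k"
      using assoc_mult_mat_vec[OF PM Lc(1) kc] by simp
    also have "\<dots> = ?Lc *\<^sub>v (poly_mat ?P ?Cc *\<^sub>v map_vec of_int k)"
      using poly_mat_intertwine[OF M Lc(1) _ commute] assoc_mult_mat_vec[OF Lc(1) PC kc] C by simp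
    also have "\<dots> = 0\<^sub>v s"
      using k(3) Lc(1) by (intro eq_vecI) auto
    finally show ?thesis .
  qed
  ultimately show ?thesis by blast
qed

lemma lattice_point_projections_nonzero:
  assumes L: "L \<in> carrier_mat s s" and "n \<le> s"
    and inj_par: "inj_on (pi_par n) (lattice_of s L)"
    and inj_perp: "inj_on (pi_perp s n) (lattice_of s L)"
    and y: "y \<in> lattice_of s L" "y \<noteq> 0\<^sub>v s"
  shows "pi_par n y \<noteq> 0\<^sub>v n" "pi_perp s n y \<noteq> 0\<^sub>v (s - n)"
proof -
  have "pi_par n (0\<^sub>v s) = 0\<^sub>v n" "pi_perp s n (0\<^sub>v s) = 0\<^sub>v (s - n)"
    using \<open>n \<le> s\<close> by (auto simp: pi_par_def pi_perp_def)
  then show "pi_par n y \<noteq> 0\<^sub>v n" "pi_perp s n y \<noteq> 0\<^sub>v (s - n)"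
    using inj_onD[OF inj_par _ y(1) zero_in_lattice_of[OF L]]
      inj_onD[OF inj_perp _ y(1) zero_in_lattice_of[OF L]] y(2)
    by metis+
qed

lemma four_block_diag_mult_append_vec:
  assumes "A \<in> carrier_mat n n" "B \<in> carrier_mat m m" "u \<in> carrier_vec n" "w \<in> carrier_vec m"
  shows "four_block_mat A (0\<^sub>m n m) (0\<^sub>m m n) B *\<^sub>v (u @\<^sub>v w) = (A *\<^sub>v u) @\<^sub>v (B *\<^sub>v w)"
proof -
  have "0\<^sub>m n m *\<^sub>v w = 0\<^sub>v n" "0\<^sub>m m n *\<^sub>v u = 0\<^sub>v m"
    using assms by (auto intro!: eq_vecI)
  then show ?thesis
    using assms
    by (simp add: four_block_mat_mult_vec[OF assms(1) zero_carrier_mat zero_carrier_mat assms(2-4)])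
qed

lemma det_poly_mat_diag_blocks_eq_0:
  fixes L :: "real mat" and A B :: "complex mat" and C :: "int mat" and p :: "rat poly"
  assumes "n \<le> s" and L: "L \<in> carrier_mat s s" "det L \<noteq> 0"
    and inj_par: "inj_on (pi_par n) (lattice_of s L)"
    and inj_perp: "inj_on (pi_perp s n) (lattice_of s L)"
    and A: "A \<in> carrier_mat n n" and B: "B \<in> carrier_mat (s - n) (s - n)"
    and C: "C \<in> carrier_mat s s"
    and commute: "four_block_mat A (0\<^sub>m n (s - n)) (0\<^sub>m (s - n) n) B * map_mat of_real L =
      map_mat of_real L * map_mat of_int C"
    and singular:
      "det (poly_mat (map_poly of_rat p) (four_block_mat A (0\<^sub>m n (s - n)) (0\<^sub>m (s - n) n) B)) = 0"
  shows "det (poly_mat (map_poly of_rat p) A) = 0 \<and> det (poly_mat (map_poly of_rat p) B) = 0"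
proof -
  let ?P = "map_poly (of_rat :: rat \<Rightarrow> complex) p"
  have M: "four_block_mat A (0\<^sub>m n (s - n)) (0\<^sub>m (s - n) n) B \<in> carrier_mat s s"
    using four_block_carrier_mat[OF A B] \<open>n \<le> s\<close> by simp
  obtain y where y: "y \<in> lattice_of s L" "y \<noteq> 0\<^sub>v s"
    and ker: "poly_mat ?P (four_block_mat A (0\<^sub>m n (s - n)) (0\<^sub>m (s - n) n) B) *\<^sub>v map_vec of_real y
      = 0\<^sub>v s"
    using poly_mat_kernel_lattice_point[OF L C M commute singular] by blast
  define u where "u = map_vec complex_of_real (pi_par n y)"
  define w where "w = map_vec complex_of_real (pi_perp s n y)"
  have u: "u \<in> carrier_vec n" "u \<noteq> 0\<^sub>v n" and w: "w \<in> carrier_vec (s - n)" "w \<noteq> 0\<^sub>v (s - n)"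
    using lattice_point_projections_nonzero[OF L(1) \<open>n \<le> s\<close> inj_par inj_perp y]
    by (auto simp: u_def w_def pi_par_def pi_perp_def vec_eq_iff)
  have "map_vec of_real y = u @\<^sub>v w"
    using lattice_of_carrier[OF L(1) y(1)] \<open>n \<le> s\<close>
    by (intro eq_vecI) (auto simp: u_def w_def pi_par_def pi_perp_def)
  then have "(poly_mat ?P A *\<^sub>v u) @\<^sub>v (poly_mat ?P B *\<^sub>v w) = 0\<^sub>v n @\<^sub>v 0\<^sub>v (s - n)"
    using ker \<open>n \<le> s\<close> u w A B
    by (simp add: poly_mat_four_block four_block_diag_mult_append_vec, intro eq_vecI, auto)
  moreover have "poly_mat ?P A *\<^sub>v u \<in> carrier_vec n"
    using mult_mat_vec_carrier[OF poly_mat_carrier[OF A] u(1)] .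
  ultimately have "poly_mat ?P A *\<^sub>v u = 0\<^sub>v n" "poly_mat ?P B *\<^sub>v w = 0\<^sub>v (s - n)"
    using append_vec_eq[OF _ zero_carrier_vec] by blast+
  then show ?thesis
    using u w det_0_iff_vec_prod_zero[OF poly_mat_carrier[OF A]]
      det_0_iff_vec_prod_zero[OF poly_mat_carrier[OF B]]
    by blast
qed

lemma eigenvalue_diag_blocks_conjugates:
  fixes L :: "real mat" and A B :: "complex mat" and C :: "int mat"
  assumes "n \<le> s" and L: "L \<in> carrier_mat s s" "det L \<noteq> 0"
    and inj_par: "inj_on (pi_par n) (lattice_of s L)"
    and inj_perp: "inj_on (pi_perp s n) (lattice_of s L)"
    and A: "A \<in> carrier_mat n n" and B: "B \<in> carrier_mat (s - n) (s - n)"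
    and C: "C \<in> carrier_mat s s"
    and commute: "four_block_mat A (0\<^sub>m n (s - n)) (0\<^sub>m (s - n) n) B * map_mat of_real L =
      map_mat of_real L * map_mat of_int C"
    and z: "eigenvalue (four_block_mat A (0\<^sub>m n (s - n)) (0\<^sub>m (s - n) n) B) z"
  shows "(\<exists>la. eigenvalue A la \<and> alg_conjugate z la) \<and> (\<exists>\<mu>. eigenvalue B \<mu> \<and> alg_conjugate z \<mu>)"
proof -
  let ?M = "four_block_mat A (0\<^sub>m n (s - n)) (0\<^sub>m (s - n) n) B"
  have M: "?M \<in> carrier_mat s s" using four_block_carrier_mat[OF A B] \<open>n \<le> s\<close> by simp
  have Lc: "map_mat complex_of_real L \<in> carrier_mat s s" "det (map_mat complex_of_real L) \<noteq> 0"
    using L by (auto simp: of_real_hom.hom_det)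
  have "eigenvalue (map_mat of_int C) z"
    using eigenvalue_intertwine[OF M Lc(1) _ commute Lc(2)] C z by simp
  then obtain p where p: "is_min_poly_Q z p"
    using eigenvalue_of_int_mat_rat_poly_root[OF C] is_min_poly_Q_exists by blast
  let ?P = "map_poly (of_rat :: rat \<Rightarrow> complex) p"
  have P: "?P \<noteq> 0" using is_min_poly_Q_nonzero[OF p] by simp
  have "det (poly_mat ?P ?M) = 0"
    using det_poly_mat_eq_0_iff[OF M P] z p by (auto simp: is_min_poly_Q_def)
  then have "det (poly_mat ?P A) = 0" "det (poly_mat ?P B) = 0"
    using det_poly_mat_diag_blocks_eq_0[OF \<open>n \<le> s\<close> L inj_par inj_perp A B C commute] by auto
  then show ?thesis
    using det_poly_mat_eq_0_iff[OF A P] det_poly_mat_eq_0_iff[OF B P] alg_conjugateI[OF p] by blast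
qed

lemma complexify_four_block_diag_intertwine:
  fixes A B L :: "real mat" and C :: "int mat"
  assumes "n \<le> s" and A: "A \<in> carrier_mat n n" and B: "B \<in> carrier_mat (s - n) (s - n)"
    and L: "L \<in> carrier_mat s s" and C: "C \<in> carrier_mat s s"
    and commute: "four_block_mat A (0\<^sub>m n (s - n)) (0\<^sub>m (s - n) n) B * L = L * map_mat of_int C"
  shows "four_block_mat (map_mat of_real A) (0\<^sub>m n (s - n)) (0\<^sub>m (s - n) n) (map_mat of_real B) *
      map_mat of_real L = map_mat complex_of_real L * map_mat of_int C"
proof -
  have M: "four_block_mat A (0\<^sub>m n (s - n)) (0\<^sub>m (s - n) n) B \<in> carrier_mat s s"
    using four_block_carrier_mat[OF A B] \<open>n \<le> s\<close> by simp
  have "map_mat complex_of_real (four_block_mat A (0\<^sub>m n (s - n)) (0\<^sub>m (s - n) n) B)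
      = four_block_mat (map_mat of_real A) (0\<^sub>m n (s - n)) (0\<^sub>m (s - n) n) (map_mat of_real B)"
    using A B by (intro eq_matI) auto
  moreover have "map_mat complex_of_real (map_mat real_of_int C) = map_mat of_int C"
    by (intro eq_matI) auto
  ultimately show ?thesis
    using arg_cong[OF commute, of "map_mat complex_of_real"] C
    by (simp add: of_real_hom.mat_hom_mult[OF M L]
        of_real_hom.mat_hom_mult[OF L, of "map_mat real_of_int C" s])
qed

theorem corollary2:
  fixes s n :: nat and L A B :: "real mat" and C :: "int mat"
  assumes "generic_cps s n L"
    and "self_similarity s n L A"
    and "B \<in> carrier_mat (s - n) (s - n)"
    and "C \<in> carrier_mat s s"
    and "four_block_mat A (0\<^sub>m n (s - n)) (0\<^sub>m (s - n) n) B * L = L * map_mat real_of_int C"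
  shows "(\<forall>la. eigenvalue (map_mat complex_of_real A) la \<longrightarrow>
            (\<exists>\<mu>. eigenvalue (map_mat complex_of_real B) \<mu> \<and> alg_conjugate la \<mu>)) \<and>
         (\<forall>\<mu>. eigenvalue (map_mat complex_of_real B) \<mu> \<longrightarrow>
            (\<exists>la. eigenvalue (map_mat complex_of_real A) la \<and> alg_conjugate \<mu> la))"
proof -
  let ?Ac = "map_mat complex_of_real A" and ?Bc = "map_mat complex_of_real B"
  have scheme: "n \<le> s" "L \<in> carrier_mat s s" "det L \<noteq> 0"
    "inj_on (pi_par n) (lattice_of s L)" "inj_on (pi_perp s n) (lattice_of s L)"
    using assms(1) by (auto simp: generic_cps_def)
  have A: "A \<in> carrier_mat n n" using assms(2) by (simp add: self_similarity_def)
  have Ac: "?Ac \<in> carrier_mat n n" and Bc: "?Bc \<in> carrier_mat (s - n) (s - n)"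
    using A assms(3) by auto
  note commute = complexify_four_block_diag_intertwine[OF scheme(1) A assms(3) scheme(2) assms(4,5)]
  note conjugates = eigenvalue_diag_blocks_conjugates[OF scheme Ac Bc assms(4) commute]
  show ?thesis
    using conjugates eigenvalue_four_block_diag_iff[OF Ac Bc] by blast
qed

end
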